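(* Let $f\in D$ and let $x\in V\setminus D$ with $l(x)\ge l(f)$. If there is a path $P$ in $G$ between $x$ and $f$ that contains no vertex of $D$ other than $f$, then there is a vertex $w\in V(H)$ such that $\delta_{G-D}(x,w)\le(2k-1)|P|$.
   Context: $G=(V,E)$ is an undirected graph with $n\ge3$ vertices and real edge weights in $[1,W]$; shortest paths in every subgraph are assumed unique; $\delta_{G'}$ denotes distance in a graph $G'$, $|P|$ the weighted length of a path $P$, and $G-R$ the graph with the vertex set $R$ deleted. Let $k=\ln n$. For $R\subseteq V$, $S\subseteq V\setminus R$, an $S$-restricted tree cover of $G-R$ is a family $\{T(w):w\in S\}$ of trees, $T(w)$ a subtree of $G-R$ rooted at $w$, such that (i) for all $u\in S$, $v\in V\setminus R$ there is $w\in S$ with $u,v\in V(T(w))$ and $\mathrm{dep}_{T(w)}(u)+\mathrm{dep}_{T(w)}(v)\le(2k-1)\delta_{G-R}(u,v)$ ($\mathrm{dep}_T(x)$ = weighted distance from $x$ to the root); (ii) each vertex lies in at most $kn^{1/k}(\ln n+1)$ trees. A vertex of such a tree $T$ is a trunk vertex if it lies on the $T$-path between two vertices of $S$; $\mathrm{Trunk}(T)$ is the subtree induced by trunk vertices; $\mathrm{pdeg}_T(v)$ is the degree of $v$ in $\mathrm{Trunk}(T)$ (0 if not trunk). Fix an integer $d\ge2$, a constant $c\ge1$, $s=4e d^{c+1}\ln^2 n+1$; $\mathrm{Hi}(\mathcal{C})$ is the set of vertices of pseudo-degree $>s$ in some tree of a tree cover $\mathcal{C}$. Fixed tree covers: $\mathcal{T}(S)$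 ($S$-restricted, of $G$) and $\mathcal{T}_R(S)$ ($(S\setminus R)$-restricted, of $G-R$), with $\mathcal{T}_\varnothing(S)=\mathcal{T}(S)$. Hierarchy tree: root $V$; a node $U$ is a leaf if $\mathrm{Hi}(\mathcal{T}(U))=\varnothing$, else it has children $W_1=\mathrm{Hi}(\mathcal{T}(U))$, $W_i=W_{i-1}\cup\mathrm{Hi}(\mathcal{T}_{W_{i-1}}(U))$ ($2\le i\le d$), recursively. Let $D\subseteq V$, $|D|\le d$, be the set of failed vertices, and fix a root-to-node path $V=U_1,U_2,\dots,U_p$ in the hierarchy tree, with $U_{p+1}=\varnothing$, such that every $f\in D$ has pseudo-degree at most $s$ in every tree of $\mathcal{T}:=\bigcup_{i=1}^p\mathcal{T}_{U_{i+1}}(U_i)$. The level $l(v)$ of $v\in V$ is the largest $l$ with $v\in U_l$. Let $s_0,t_0\in V\setminus D$ be two query vertices. For $f\in D$ and $T\in\mathcal{T}$ with $f\in V(T)$, let $N_T(f)=\{\mathrm{parent}_T(f)\}\cup(\mathrm{children}_T(f)\cap\mathrm{Trunk}(T))$ (the parent term omitted if $f$ is the root), $N(f)=\bigcup_{T\in\mathcal{T},\,f\in V(T)}N_T(f)$, and $V(H)=\big(\{s_0,t_0\}\cup\bigcup_{f\in D}N(f)\big)\setminus D$. *)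

theory Defs
  imports Complex_Main "HOL-Library.Extended_Real"
begin

text \<open>A graph is given by a vertex set V, an edge set E of 2-element subsets of V,
  and a weight function wt on edges. A subgraph is given by a vertex set A and an
  edge set F.\<close>

definition walk_in :: "'a set \<Rightarrow> 'a set set \<Rightarrow> 'a list \<Rightarrow> bool" where
  "walk_in A F p \<longleftrightarrow> p \<noteq> [] \<and> set p \<subseteq> A \<and>
     (\<forall>i. Suc i < length p \<longrightarrow> {p ! i, p ! Suc i} \<in> F)"

definition path_in :: "'a set \<Rightarrow> 'a set set \<Rightarrow> 'a list \<Rightarrow> bool" where
  "path_in A F p \<longleftrightarrow> walk_in A F p \<and> distinct p"

definition path_betw :: "'a set \<Rightarrow> 'a set set \<Rightarrow> 'a \<Rightarrow> 'a \<Rightarrow> 'a list \<Rightarrow> bool" where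
  "path_betw A F u v p \<longleftrightarrow> path_in A F p \<and> hd p = u \<and> last p = v"

definition plen :: "('a set \<Rightarrow> real) \<Rightarrow> 'a list \<Rightarrow> real" where
  "plen wt p = (\<Sum>i<length p - 1. wt {p ! i, p ! Suc i})"

text \<open>Distance in the subgraph (A,F); infinity if no path exists.\<close>
definition gdist :: "'a set \<Rightarrow> 'a set set \<Rightarrow> ('a set \<Rightarrow> real) \<Rightarrow> 'a \<Rightarrow> 'a \<Rightarrow> ereal" where
  "gdist A F wt u v = (INF p \<in> {p. path_betw A F u v p}. ereal (plen wt p))"

definition del_edges :: "'a set set \<Rightarrow> 'a set \<Rightarrow> 'a set set" where
  "del_edges E R = {e \<in> E. e \<inter> R = {}}"

definition dist_del :: "'a set \<Rightarrow> 'a set set \<Rightarrow> ('a set \<Rightarrow> real) \<Rightarrow> 'a set \<Rightarrow> 'a \<Rightarrow> 'a \<Rightarrow> ereal" where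
  "dist_del V E wt R u v = gdist (V - R) (del_edges E R) wt u v"

definition wgraph :: "'a set \<Rightarrow> 'a set set \<Rightarrow> ('a set \<Rightarrow> real) \<Rightarrow> real \<Rightarrow> bool" where
  "wgraph V E wt W \<longleftrightarrow> finite V \<and>
     E \<subseteq> {{u, v} | u v. u \<in> V \<and> v \<in> V \<and> u \<noteq> v} \<and>
     (\<forall>e\<in>E. 1 \<le> wt e \<and> wt e \<le> W)"

definition unique_sp :: "'a set \<Rightarrow> 'a set set \<Rightarrow> ('a set \<Rightarrow> real) \<Rightarrow> bool" where
  "unique_sp V E wt \<longleftrightarrow> (\<forall>A F u v p q. A \<subseteq> V \<longrightarrow> F \<subseteq> E \<longrightarrow>
      path_betw A F u v p \<longrightarrow> path_betw A F u v q \<longrightarrow>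
      ereal (plen wt p) = gdist A F wt u v \<longrightarrow> ereal (plen wt q) = gdist A F wt u v \<longrightarrow> p = q)"

type_synonym 'a rtree = "'a set \<times> 'a set set \<times> 'a"

definition tverts :: "'a rtree \<Rightarrow> 'a set" where "tverts T = fst T"
definition tedges :: "'a rtree \<Rightarrow> 'a set set" where "tedges T = fst (snd T)"
definition troot :: "'a rtree \<Rightarrow> 'a" where "troot T = snd (snd T)"

text \<open>T is a subtree of the subgraph (A,F): a subgraph in which any two vertices are
  joined by exactly one path (i.e. connected and acyclic), containing its root.\<close>
definition is_subtree :: "'a set \<Rightarrow> 'a set set \<Rightarrow> 'a rtree \<Rightarrow> bool" where
  "is_subtree A F T \<longleftrightarrow> tverts T \<subseteq> A \<and> tedges T \<subseteq> F \<and>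
     (\<forall>e\<in>tedges T. e \<subseteq> tverts T) \<and> troot T \<in> tverts T \<and>
     (\<forall>u\<in>tverts T. \<forall>v\<in>tverts T. \<exists>!p. path_betw (tverts T) (tedges T) u v p)"

definition tpath :: "'a rtree \<Rightarrow> 'a \<Rightarrow> 'a \<Rightarrow> 'a list" where
  "tpath T u v = (THE p. path_betw (tverts T) (tedges T) u v p)"

definition dep :: "('a set \<Rightarrow> real) \<Rightarrow> 'a rtree \<Rightarrow> 'a \<Rightarrow> real" where
  "dep wt T x = plen wt (tpath T x (troot T))"

definition tparent :: "'a rtree \<Rightarrow> 'a \<Rightarrow> 'a" where
  "tparent T v = tpath T v (troot T) ! 1"

definition tchildren :: "'a rtree \<Rightarrow> 'a \<Rightarrow> 'a set" where
  "tchildren T v = {c \<in> tverts T. c \<noteq> troot T \<and> tparent T c = v}"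

definition trunk :: "'a set \<Rightarrow> 'a rtree \<Rightarrow> 'a set" where
  "trunk S T = {v. \<exists>a\<in>S \<inter> tverts T. \<exists>b\<in>S \<inter> tverts T. v \<in> set (tpath T a b)}"

definition pdeg :: "'a set \<Rightarrow> 'a rtree \<Rightarrow> 'a \<Rightarrow> nat" where
  "pdeg S T v = (if v \<in> trunk S T then card {u \<in> trunk S T. {u, v} \<in> tedges T} else 0)"

definition is_tree_cover :: "'a set \<Rightarrow> 'a set set \<Rightarrow> ('a set \<Rightarrow> real) \<Rightarrow> 'a set \<Rightarrow> 'a set
    \<Rightarrow> ('a \<Rightarrow> 'a rtree) \<Rightarrow> bool" where
  "is_tree_cover V E wt R S C \<longleftrightarrow>
     (let n = real (card V); k = ln n in
       S \<subseteq> V - R \<and>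
       (\<forall>w\<in>S. is_subtree (V - R) (del_edges E R) (C w) \<and> troot (C w) = w) \<and>
       (\<forall>u\<in>S. \<forall>v\<in>V - R. dist_del V E wt R u v < \<infinity> \<longrightarrow>
          (\<exists>w\<in>S. u \<in> tverts (C w) \<and> v \<in> tverts (C w) \<and>
             ereal (dep wt (C w) u + dep wt (C w) v) \<le> ereal (2 * k - 1) * dist_del V E wt R u v)) \<and>
       (\<forall>v\<in>V. real (card {w \<in> S. v \<in> tverts (C w)}) \<le> k * n powr (1 / k) * (ln n + 1)))"

definition Hi :: "real \<Rightarrow> 'a set \<Rightarrow> ('a \<Rightarrow> 'a rtree) \<Rightarrow> 'a set" where
  "Hi s S C = {v. \<exists>w\<in>S. real (pdeg S (C w) v) > s}"

text \<open>TCR R S is the fixed cover T_R(S), restricted to S - R; T(S) = TCR {} S.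
  Wch s TCR U i is the child W_i of U (with W_0 = {}, so W_1 = Hi(T(U))).\<close>
fun Wch :: "real \<Rightarrow> ('a set \<Rightarrow> 'a set \<Rightarrow> 'a \<Rightarrow> 'a rtree) \<Rightarrow> 'a set \<Rightarrow> nat \<Rightarrow> 'a set" where
  "Wch s TCR U 0 = {}"
| "Wch s TCR U (Suc i) = Wch s TCR U i \<union> Hi s (U - Wch s TCR U i) (TCR (Wch s TCR U i) U)"

text \<open>Us = [U_1,...,U_p] is a root-to-node path in the hierarchy tree.\<close>
definition hier_path :: "real \<Rightarrow> nat \<Rightarrow> ('a set \<Rightarrow> 'a set \<Rightarrow> 'a \<Rightarrow> 'a rtree) \<Rightarrow> 'a set
    \<Rightarrow> 'a set list \<Rightarrow> bool" where
  "hier_path s d TCR V Us \<longleftrightarrow> Us \<noteq> [] \<and> hd Us = V \<and>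
     (\<forall>i. Suc i < length Us \<longrightarrow> Hi s (Us ! i) (TCR {} (Us ! i)) \<noteq> {} \<and>
        (\<exists>j\<in>{1..d}. Us ! Suc i = Wch s TCR (Us ! i) j))"

text \<open>U_{i+1}, with U_{p+1} = {} (0-indexed).\<close>
definition nextU :: "'a set list \<Rightarrow> nat \<Rightarrow> 'a set" where
  "nextU Us i = (if Suc i < length Us then Us ! Suc i else {})"

text \<open>The trees of the union of the covers T_{U_{i+1}}(U_i), each paired with the
  restricting set U_i - U_{i+1} of its cover.\<close>
definition cov_trees :: "('a set \<Rightarrow> 'a set \<Rightarrow> 'a \<Rightarrow> 'a rtree) \<Rightarrow> 'a set list
    \<Rightarrow> ('a set \<times> 'a rtree) set" where
  "cov_trees TCR Us = {(Us ! i - nextU Us i, TCR (nextU Us i) (Us ! i) w) | i w.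
       i < length Us \<and> w \<in> Us ! i - nextU Us i}"

text \<open>Level (0-indexed; differs from the paper's by the constant 1).\<close>
definition lvl :: "'a set list \<Rightarrow> 'a \<Rightarrow> nat" where
  "lvl Us v = Max {i. i < length Us \<and> v \<in> Us ! i}"

definition NT :: "'a set \<Rightarrow> 'a rtree \<Rightarrow> 'a \<Rightarrow> 'a set" where
  "NT S T f = (if f = troot T then {} else {tparent T f}) \<union> (tchildren T f \<inter> trunk S T)"

definition Nf :: "('a set \<Rightarrow> 'a set \<Rightarrow> 'a \<Rightarrow> 'a rtree) \<Rightarrow> 'a set list \<Rightarrow> 'a \<Rightarrow> 'a set" where
  "Nf TCR Us f = (\<Union>(S, T) \<in> {(S, T) \<in> cov_trees TCR Us. f \<in> tverts T}. NT S T f)"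

definition VH :: "('a set \<Rightarrow> 'a set \<Rightarrow> 'a \<Rightarrow> 'a rtree) \<Rightarrow> 'a set list \<Rightarrow> 'a set \<Rightarrow> 'a \<Rightarrow> 'a \<Rightarrow> 'a set" where
  "VH TCR Us D s0 t0 = ({s0, t0} \<union> (\<Union>f\<in>D. Nf TCR Us f)) - D"

end

theory Submission
  imports Defs
begin

(* Let y be a vertex of maximal level j on P other than f. As l(f) <= l(x) <= j, no vertex of P
   lies in U_{j+1}, so the segment P[y,f] lives in G - U_{j+1}, and the cover T_{U_{j+1}}(U_j)
   has a tree T through y and f, rooted in U_j - U_{j+1}, with dep(y) + dep(f) <= (2k-1)|P[y,f]|.
   Walk in T from y towards the root. If this meets D, stop just before the first failed vertex g:
   the last vertex is a child of g lying on the trunk (it is on the T-path from y to the root), so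
   it belongs to N(g). Otherwise descend from the root towards f and stop at the parent of the last
   failed vertex on the way. Either way P[x,y] followed by the detour avoids D, ends in V(H) and has
   length at most |P[x,y]| + dep(y) + dep(f) <= (2k-1)|P|. *)

lemma walk_in_iff_successively:
  "walk_in A F p \<longleftrightarrow> p \<noteq> [] \<and> set p \<subseteq> A \<and> successively (\<lambda>a b. {a, b} \<in> F) p"
  by (simp add: walk_in_def successively_conv_nth)

lemma walk_in_append_Cons_iff:
  "walk_in A F (xs @ u # ys) \<longleftrightarrow> walk_in A F (xs @ [u]) \<and> walk_in A F (u # ys)"
  by (auto simp: walk_in_iff_successively successively_append_iff)

lemma walk_in_appendD:
  assumes "walk_in A F (xs @ ys)"
  shows "xs \<noteq> [] \<Longrightarrow> walk_in A F xs" and "ys \<noteq> [] \<Longrightarrow> walk_in A F ys"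
  using assms by (auto simp: walk_in_iff_successively successively_append_iff)

lemma walk_in_rev [simp]: "walk_in A F (rev p) \<longleftrightarrow> walk_in A F p"
  by (simp add: walk_in_iff_successively insert_commute)

lemma walk_in_mono: "walk_in A F p \<Longrightarrow> A \<subseteq> A' \<Longrightarrow> F \<subseteq> F' \<Longrightarrow> walk_in A' F' p"
  by (auto simp: walk_in_def)

lemma walk_in_Diff_iff: "walk_in (A - D) F p \<longleftrightarrow> walk_in A F p \<and> set p \<inter> D = {}"
  by (auto simp: walk_in_def)

lemma walk_in_del_edges:
  "walk_in A F p \<Longrightarrow> set p \<inter> R = {} \<Longrightarrow> walk_in (A - R) (del_edges F R) p"
  by (auto simp: walk_in_iff_successively del_edges_def intro: successively_mono)

lemma plen_Nil [simp]: "plen wt [] = 0"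
  and plen_singleton [simp]: "plen wt [a] = 0"
  and plen_Cons_Cons [simp]: "plen wt (a # b # p) = wt {a, b} + plen wt (b # p)"
  by (simp_all add: plen_def sum.lessThan_Suc_shift del: sum.lessThan_Suc)

lemma plen_append_Cons: "plen wt (xs @ u # ys) = plen wt (xs @ [u]) + plen wt (u # ys)"
  by (induction xs rule: induct_list012) auto

lemma plen_snoc_snoc: "plen wt (xs @ [a, b]) = plen wt (xs @ [a]) + wt {a, b}"
  by (induction xs rule: induct_list012) auto

lemma plen_rev [simp]: "plen wt (rev p) = plen wt p"
  by (induction p rule: induct_list012) (auto simp: plen_snoc_snoc insert_commute)

lemma plen_nonneg: "walk_in A F p \<Longrightarrow> \<forall>e\<in>F. 0 \<le> wt e \<Longrightarrow> 0 \<le> plen wt p"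
  by (induction p rule: induct_list012) (auto simp: walk_in_iff_successively)

lemma plen_append_le:
  assumes "walk_in A F (xs @ ys)" and nonneg: "\<forall>e\<in>F. 0 \<le> wt e"
  shows "plen wt xs \<le> plen wt (xs @ ys)" and "plen wt ys \<le> plen wt (xs @ ys)"
proof -
  show "plen wt xs \<le> plen wt (xs @ ys)"
  proof (cases "xs = [] \<or> ys = []")
    case False
    then obtain xs' v where xs: "xs = xs' @ [v]" by (cases xs rule: rev_cases) auto
    then have "walk_in A F (v # ys)"
      using assms(1) walk_in_append_Cons_iff[of A F xs' v ys] by simp
    then show ?thesis
      using plen_append_Cons[of wt xs' v ys] plen_nonneg[OF _ nonneg] by (simp add: xs)
  qed (use plen_nonneg[OF assms] in auto)
  show "plen wt ys \<le> plen wt (xs @ ys)"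
  proof (cases "xs = [] \<or> ys = []")
    case False
    then obtain u ys' where ys: "ys = u # ys'" by (cases ys) auto
    then have "walk_in A F (xs @ [u])"
      using assms(1) walk_in_append_Cons_iff[of A F xs u ys'] by simp
    then show ?thesis
      using plen_append_Cons[of wt xs u ys'] plen_nonneg[OF _ nonneg] by (simp add: ys)
  qed (use plen_nonneg[OF assms] in auto)
qed

lemma gdist_le_plen:
  assumes "walk_in A F p" and nonneg: "\<forall>e\<in>F. 0 \<le> wt e"
  shows "gdist A F wt (hd p) (last p) \<le> ereal (plen wt p)"
  using assms(1)
proof (induction "length p" arbitrary: p rule: less_induct)
  case less
  show ?case
  proof (cases "distinct p")
    case True
    then have "path_betw A F (hd p) (last p) p"
      using less.prems by (simp add: path_betw_def path_in_def)
    then show ?thesis unfolding gdist_def by (auto intro: INF_lower)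
  next
    case False
    then obtain xs z ys zs where p: "p = xs @ z # ys @ z # zs"
      using not_distinct_decomp[of p] by auto
    let ?p' = "xs @ z # zs"
    have loop: "walk_in A F (z # ys @ z # zs)" and "walk_in A F (xs @ [z])"
      using less.prems walk_in_append_Cons_iff[of A F xs z "ys @ z # zs"] by (simp_all add: p)
    with loop have walks: "walk_in A F (xs @ [z])" "walk_in A F (z # ys @ [z])" "walk_in A F (z # zs)"
      using walk_in_append_Cons_iff[of A F "z # ys" z zs] by simp_all
    have "plen wt p = plen wt (xs @ [z]) + plen wt (z # ys @ [z]) + plen wt (z # zs)"
      using plen_append_Cons[of wt xs z "ys @ z # zs"] plen_append_Cons[of wt "z # ys" z zs]
      by (simp add: p)
    moreover have "plen wt ?p' = plen wt (xs @ [z]) + plen wt (z # zs)"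
      by (rule plen_append_Cons)
    moreover have "0 \<le> plen wt (z # ys @ [z])"
      using plen_nonneg[OF walks(2) nonneg] .
    ultimately have "plen wt ?p' \<le> plen wt p" by simp
    moreover have "gdist A F wt (hd ?p') (last ?p') \<le> ereal (plen wt ?p')"
      using walks walk_in_append_Cons_iff[of A F xs z zs] by (intro less.hyps) (simp_all add: p)
    moreover have "hd ?p' = hd p" "last ?p' = last p"
      unfolding p by (simp_all add: hd_append)
    ultimately show ?thesis by (metis ereal_less_eq(3) order_trans)
  qed
qed

lemma dist_del_le_plen_append:
  assumes "walk_in V E (xs @ [u])" "walk_in V E (u # ys)" "set (xs @ u # ys) \<inter> D = {}"
    and nonneg: "\<forall>e\<in>E. 0 \<le> wt e"
  shows "dist_del V E wt D (hd (xs @ [u])) (last (u # ys)) \<le> plen wt (xs @ [u]) + plen wt (u # ys)"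
proof -
  have "walk_in V E (xs @ u # ys)" using assms(1,2) walk_in_append_Cons_iff[of V E xs u ys] by simp
  then have "walk_in (V - D) (del_edges E D) (xs @ u # ys)"
    using assms(3) by (rule walk_in_del_edges)
  then have "gdist (V - D) (del_edges E D) wt (hd (xs @ u # ys)) (last (xs @ u # ys))
      \<le> ereal (plen wt (xs @ u # ys))"
    by (rule gdist_le_plen) (simp add: del_edges_def nonneg)
  moreover have "hd (xs @ u # ys) = hd (xs @ [u])" "last (xs @ u # ys) = last (u # ys)"
    by (simp_all add: hd_append)
  ultimately show ?thesis by (simp only: dist_del_def plen_append_Cons[of wt xs u ys])
qed

lemma walk_in_butlast_append_rev:
  assumes "walk_in A F q" "walk_in A F zs" "last q = last zs"
  shows "walk_in A F (butlast q @ rev zs)" and "hd (butlast q @ rev zs) = hd q"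
    and "last (butlast q @ rev zs) = hd zs" and "set (butlast q @ rev zs) \<subseteq> set q \<union> set zs"
    and "plen wt (butlast q @ rev zs) = plen wt q + plen wt zs"
proof -
  obtain qb r where q: "q = qb @ [r]"
    using assms(1) by (cases q rule: rev_cases) (auto simp: walk_in_def)
  obtain zr where zr: "rev zs = r # zr"
    using assms(2,3) q by (cases zs rule: rev_cases) (auto simp: walk_in_def)
  have "walk_in A F (r # zr)" using assms(2) zr walk_in_rev[of A F zs] by simp
  then show "walk_in A F (butlast q @ rev zs)"
    using assms(1) q zr walk_in_append_Cons_iff[of A F qb r zr] by simp
  show "hd (butlast q @ rev zs) = hd q" using q zr by (cases qb) auto
  show "last (butlast q @ rev zs) = hd zs"
    using zr last_rev[of zs] assms(2) by (simp add: walk_in_def)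
  show "set (butlast q @ rev zs) \<subseteq> set q \<union> set zs" using q by auto
  show "plen wt (butlast q @ rev zs) = plen wt q + plen wt zs"
    using plen_append_Cons[of wt qb r zr] q zr plen_rev[of wt zs] by simp
qed

lemma tpath_betw:
  "is_subtree A F T \<Longrightarrow> u \<in> tverts T \<Longrightarrow> v \<in> tverts T \<Longrightarrow>
    path_betw (tverts T) (tedges T) u v (tpath T u v)"
  unfolding tpath_def is_subtree_def by (rule theI') blast

lemma tpath_unique:
  "is_subtree A F T \<Longrightarrow> u \<in> tverts T \<Longrightarrow> v \<in> tverts T \<Longrightarrow>
    path_betw (tverts T) (tedges T) u v p \<Longrightarrow> tpath T u v = p"
  unfolding tpath_def is_subtree_def by (rule the1_equality) blast+

lemma tpath_suffix:
  assumes T: "is_subtree A F T" and "a \<in> tverts T" "b \<in> tverts T"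
    and split: "tpath T a b = xs @ ys" and "ys \<noteq> []"
  shows "tpath T (hd ys) b = ys"
proof -
  have ab: "path_betw (tverts T) (tedges T) a b (xs @ ys)"
    using tpath_betw[OF T \<open>a \<in> tverts T\<close> \<open>b \<in> tverts T\<close>] split by simp
  then have "path_betw (tverts T) (tedges T) (hd ys) b ys"
    using \<open>ys \<noteq> []\<close> walk_in_appendD(2)[of "tverts T" "tedges T" xs ys]
    by (simp add: path_betw_def path_in_def)
  moreover have "hd ys \<in> tverts T"
    using ab \<open>ys \<noteq> []\<close> by (auto simp: path_betw_def path_in_def walk_in_def)
  ultimately show ?thesis using tpath_unique[OF T _ \<open>b \<in> tverts T\<close>] by blast
qed

lemma tparent_tpath_root:
  assumes T: "is_subtree A F T" and a: "a \<in> tverts T"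
    and split: "tpath T a (troot T) = xs @ u # v # ys"
  shows "tparent T u = v" and "u \<noteq> troot T"
proof -
  have r: "troot T \<in> tverts T" using T by (simp add: is_subtree_def)
  have u: "tpath T u (troot T) = u # v # ys"
    using tpath_suffix[OF T a r split] by simp
  then show "tparent T u = v" by (simp add: tparent_def)
  have "u \<in> tverts T"
    using tpath_betw[OF T a r] split by (auto simp: path_betw_def path_in_def walk_in_def)
  from tpath_betw[OF T this r]
  have "path_betw (tverts T) (tedges T) u (troot T) (u # v # ys)" by (simp only: u)
  then show "u \<noteq> troot T"
    by (cases ys rule: rev_cases) (auto simp: path_betw_def path_in_def)
qed

lemma tpath_to_root:
  assumes "is_subtree A F T" "v \<in> tverts T"
  shows "walk_in (tverts T) (tedges T) (tpath T v (troot T))"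
    and "hd (tpath T v (troot T)) = v" and "last (tpath T v (troot T)) = troot T"
  using tpath_betw[OF assms] assms(1) by (simp_all add: is_subtree_def path_betw_def path_in_def)

lemma dep_nonneg: "is_subtree A F T \<Longrightarrow> \<forall>e\<in>tedges T. 0 \<le> wt e \<Longrightarrow> v \<in> tverts T \<Longrightarrow> 0 \<le> dep wt T v"
  unfolding dep_def by (rule plen_nonneg[OF tpath_to_root(1)])

lemma tree_walk_to_trunk_child:
  assumes T: "is_subtree A F T" and nonneg: "\<forall>e\<in>tedges T. 0 \<le> wt e"
    and y: "y \<in> S" "y \<in> tverts T" "y \<notin> D" and root: "troot T \<in> S"
    and meets: "\<exists>v\<in>set (tpath T y (troot T)). v \<in> D"
  obtains g z p where "g \<in> D" "g \<in> tverts T" "z \<in> tchildren T g \<inter> trunk S T"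
    "walk_in (tverts T - D) (tedges T) p" "hd p = y" "last p = z" "plen wt p \<le> dep wt T y"
proof -
  let ?r = "troot T"
  let ?q = "tpath T y ?r"
  have r: "?r \<in> tverts T" using T by (simp add: is_subtree_def)
  have q: "walk_in (tverts T) (tedges T) ?q" "hd ?q = y"
    using tpath_to_root[OF T y(2)] by simp_all
  obtain ys g zs where q_split: "?q = ys @ g # zs" "g \<in> D" "\<forall>v\<in>set ys. v \<notin> D"
    using split_list_first_prop[OF meets] by blast
  have "ys \<noteq> []" using q(2) q_split y(3) by auto
  then obtain ys' z where ys: "ys = ys' @ [z]" by (cases ys rule: rev_cases) auto
  have q_split': "?q = ys' @ z # g # zs" using q_split ys by simp
  have "z \<in> set ?q" using q_split' by simp
  have "z \<in> tverts T" "g \<in> tverts T" using q(1) q_split' by (auto simp: walk_in_def)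
  then have "z \<in> tchildren T g"
    using tparent_tpath_root[OF T y(2) q_split'] by (simp add: tchildren_def)
  moreover have "z \<in> trunk S T" using \<open>z \<in> set ?q\<close> y root r unfolding trunk_def by blast
  moreover have "walk_in (tverts T - D) (tedges T) ys"
    using walk_in_appendD(1)[of _ _ ys "g # zs"] q(1) q_split \<open>ys \<noteq> []\<close>
    by (simp add: walk_in_Diff_iff disjoint_iff)
  moreover have "plen wt ys \<le> dep wt T y"
    using plen_append_le(1)[of _ _ ys "g # zs"] q(1) q_split nonneg by (simp add: dep_def)
  moreover have "hd ys = y" using q(2) q_split \<open>ys \<noteq> []\<close> by simp
  ultimately show ?thesis using that \<open>g \<in> D\<close> \<open>g \<in> tverts T\<close> ys by simp
qed

lemma tree_walk_to_parent:
  assumes T: "is_subtree A F T" and nonneg: "\<forall>e\<in>tedges T. 0 \<le> wt e"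
    and y: "y \<in> tverts T" and avoids: "set (tpath T y (troot T)) \<inter> D = {}"
    and f: "f \<in> D" "f \<in> tverts T"
  obtains g p where "g \<in> D" "g \<in> tverts T" "g \<noteq> troot T"
    "walk_in (tverts T - D) (tedges T) p" "hd p = y" "last p = tparent T g"
    "plen wt p \<le> dep wt T y + dep wt T f"
proof -
  let ?r = "troot T"
  let ?q = "tpath T y ?r"
  let ?q' = "tpath T f ?r"
  have q: "walk_in (tverts T) (tedges T) ?q" "hd ?q = y" "last ?q = ?r"
    using tpath_to_root[OF T y] .
  have q': "walk_in (tverts T) (tedges T) ?q'" "hd ?q' = f" "last ?q' = ?r"
    using tpath_to_root[OF T f(2)] .
  have "?r \<notin> D" using avoids q(1,3) last_in_set[of ?q] by (auto simp: walk_in_def)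
  have "f \<in> set ?q'" using q'(1,2) hd_in_set[of ?q'] by (simp add: walk_in_def)
  then obtain ys g zs where q'_split: "?q' = (ys @ [g]) @ zs" "g \<in> D" "\<forall>v\<in>set zs. v \<notin> D"
    using f(1) split_list_last_prop[of ?q' "\<lambda>v. v \<in> D"] by auto
  have "zs \<noteq> []" using q'(3) q'_split \<open>?r \<notin> D\<close> by auto
  then obtain z zs' where zs: "zs = z # zs'" by (cases zs) auto
  have "tparent T g = z" "g \<noteq> ?r"
    using tparent_tpath_root[OF T f(2), of ys g z zs'] q'_split zs by simp_all
  have "g \<in> tverts T" using q'(1) q'_split by (auto simp: walk_in_def)
  have zs_walk: "walk_in (tverts T) (tedges T) zs"
    using walk_in_appendD(2)[of _ _ "ys @ [g]" zs] q'(1) q'_split \<open>zs \<noteq> []\<close> by simp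
  have "last ?q = last zs" using q(3) q'(3) q'_split \<open>zs \<noteq> []\<close> by simp
  note down = walk_in_butlast_append_rev[OF q(1) zs_walk this, unfolded q(2)]
  show ?thesis
  proof (rule that[OF \<open>g \<in> D\<close> \<open>g \<in> tverts T\<close> \<open>g \<noteq> ?r\<close> _ down(2)])
    show "walk_in (tverts T - D) (tedges T) (butlast ?q @ rev zs)"
      using down(1,4) avoids q'_split(3) by (auto simp: walk_in_Diff_iff)
    show "last (butlast ?q @ rev zs) = tparent T g" using down(3) zs \<open>tparent T g = z\<close> by simp
    have "plen wt zs \<le> dep wt T f"
      using plen_append_le(2)[of _ _ "ys @ [g]" zs wt] q'(1) q'_split nonneg by (simp add: dep_def)
    then show "plen wt (butlast ?q @ rev zs) \<le> dep wt T y + dep wt T f"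
      using down(5) by (simp add: dep_def)
  qed
qed

lemma Hi_subset:
  assumes cover: "is_tree_cover V E wt R S C" and "0 \<le> s"
  shows "Hi s S C \<subseteq> V - R"
proof
  fix v assume "v \<in> Hi s S C"
  then obtain w where w: "w \<in> S" "s < real (pdeg S (C w) v)" by (auto simp: Hi_def)
  then have "v \<in> trunk S (C w)" using \<open>0 \<le> s\<close> by (auto simp: pdeg_def split: if_splits)
  then obtain a b where ab: "a \<in> tverts (C w)" "b \<in> tverts (C w)" "v \<in> set (tpath (C w) a b)"
    by (auto simp: trunk_def)
  have T: "is_subtree (V - R) (del_edges E R) (C w)"
    using cover w(1) by (simp add: is_tree_cover_def Let_def)
  then have "set (tpath (C w) a b) \<subseteq> tverts (C w)"
    using tpath_betw[OF T ab(1,2)] by (simp add: path_betw_def path_in_def walk_in_def)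
  with T ab(3) show "v \<in> V - R" by (auto simp: is_subtree_def)
qed

lemma Wch_subset:
  assumes covers: "\<forall>R S. R \<subseteq> V \<longrightarrow> S \<subseteq> V \<longrightarrow> is_tree_cover V E wt R (S - R) (TCR R S)"
    and "0 \<le> s" and "U \<subseteq> V"
  shows "Wch s TCR U j \<subseteq> V"
proof (induction j)
  case (Suc j)
  then have "is_tree_cover V E wt (Wch s TCR U j) (U - Wch s TCR U j) (TCR (Wch s TCR U j) U)"
    using covers \<open>U \<subseteq> V\<close> by blast
  then have "Hi s (U - Wch s TCR U j) (TCR (Wch s TCR U j) U) \<subseteq> V - Wch s TCR U j"
    using \<open>0 \<le> s\<close> by (rule Hi_subset)
  then show ?case using Suc.IH by auto
qed simp

lemma hier_path_subset:
  assumes covers: "\<forall>R S. R \<subseteq> V \<longrightarrow> S \<subseteq> V \<longrightarrow> is_tree_cover V E wt R (S - R) (TCR R S)"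
    and "0 \<le> s" and Us: "hier_path s d TCR V Us"
  shows "i < length Us \<Longrightarrow> Us ! i \<subseteq> V"
proof (induction i)
  case 0
  then show ?case using Us by (simp add: hier_path_def hd_conv_nth)
next
  case (Suc i)
  then obtain j where "Us ! Suc i = Wch s TCR (Us ! i) j"
    using Us Suc.prems unfolding hier_path_def by blast
  then show ?case using Wch_subset[OF covers \<open>0 \<le> s\<close>] Suc by simp
qed

lemma lvl_ge: "i < length Us \<Longrightarrow> v \<in> Us ! i \<Longrightarrow> i \<le> lvl Us v"
  unfolding lvl_def by (rule Max_ge) auto

lemma lvl_mem:
  assumes "i < length Us" "v \<in> Us ! i"
  shows "lvl Us v < length Us" and "v \<in> Us ! lvl Us v"
proof -
  have "lvl Us v \<in> {i. i < length Us \<and> v \<in> Us ! i}"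
    unfolding lvl_def using assms by (intro Max_in) auto
  then show "lvl Us v < length Us" and "v \<in> Us ! lvl Us v" by auto
qed

lemma lvl_less_if_mem_nextU: "v \<in> nextU Us (lvl Us y) \<Longrightarrow> lvl Us y < lvl Us v"
  using lvl_ge[of "Suc (lvl Us y)" Us v] by (auto simp: nextU_def split: if_splits)

lemma one_le_ln_card: "3 \<le> card V \<Longrightarrow> 1 \<le> ln (real (card V))"
  using exp_le by (subst ln_ge_iff) auto

lemma tree_cover_tree_through_walk:
  assumes cover: "is_tree_cover V E wt R S C" and "3 \<le> card V"
    and nonneg: "\<forall>e\<in>E. 0 \<le> wt e" and "u \<in> S"
    and p: "walk_in (V - R) (del_edges E R) p" "hd p = u" "last p = v"
  obtains w where "w \<in> S" "is_subtree (V - R) (del_edges E R) (C w)" "troot (C w) = w"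
    "u \<in> tverts (C w)" "v \<in> tverts (C w)"
    "dep wt (C w) u + dep wt (C w) v \<le> (2 * ln (real (card V)) - 1) * plen wt p"
proof -
  let ?c = "2 * ln (real (card V)) - 1"
  have dist: "dist_del V E wt R u v \<le> ereal (plen wt p)"
    using gdist_le_plen[OF p(1)] nonneg p(2,3) by (auto simp: dist_del_def del_edges_def)
  have "v \<in> V - R" using p(1,3) last_in_set[of p] by (auto simp: walk_in_def)
  moreover have "dist_del V E wt R u v < \<infinity>" using dist by (rule le_less_trans) simp
  ultimately obtain w where w: "w \<in> S" "u \<in> tverts (C w)" "v \<in> tverts (C w)"
    and dep: "ereal (dep wt (C w) u + dep wt (C w) v) \<le> ereal ?c * dist_del V E wt R u v"
    using cover \<open>u \<in> S\<close> unfolding is_tree_cover_def Let_def by blast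
  have "0 \<le> ?c" using one_le_ln_card[OF \<open>3 \<le> card V\<close>] by simp
  note dep
  also have "ereal ?c * dist_del V E wt R u v \<le> ereal ?c * ereal (plen wt p)"
    using \<open>0 \<le> ?c\<close> by (intro ereal_mult_left_mono[OF dist]) simp
  finally have "dep wt (C w) u + dep wt (C w) v \<le> ?c * plen wt p" by simp
  moreover have "is_subtree (V - R) (del_edges E R) (C w)" "troot (C w) = w"
    using cover w(1) by (simp_all add: is_tree_cover_def Let_def)
  ultimately show ?thesis using that w by blast
qed

lemma top_level_vertex:
  assumes Us: "i < length Us" "set P \<subseteq> Us ! i"
    and P: "P \<noteq> []" "distinct P" "hd P = x" "last P = f" "x \<noteq> f"
    and lvl: "lvl Us f \<le> lvl Us x"
  obtains P1 y P2 where "P = P1 @ y # P2" "f \<notin> set (P1 @ [y])"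
    "lvl Us y < length Us" "y \<in> Us ! lvl Us y" "set P \<inter> nextU Us (lvl Us y) = {}"
proof -
  obtain Px where P_snoc: "P = Px @ [f]" using P(1,4) by (cases P rule: rev_cases) auto
  have "x \<in> set Px" using P(3,5) P_snoc by (cases Px) auto
  then have "set Px \<noteq> {}" by auto
  then obtain y where y: "y \<in> set Px" and y_max: "Max (lvl Us ` set Px) = lvl Us y"
    by (rule obtains_MAX[OF finite_set])
  have "lvl Us v \<le> lvl Us y" if "v \<in> set P" for v
    using that lvl Max_ge[of "lvl Us ` set Px"] \<open>x \<in> set Px\<close> P_snoc
    by (auto simp flip: y_max intro: order.trans)
  then have "set P \<inter> nextU Us (lvl Us y) = {}" using lvl_less_if_mem_nextU by force
  moreover have "lvl Us y < length Us" "y \<in> Us ! lvl Us y"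
    using lvl_mem[OF Us(1)] Us(2) y P_snoc by auto
  moreover obtain P1 P2 where split: "P = P1 @ y # P2"
    using y P_snoc split_list[of y P] by auto
  moreover have "f \<notin> set (P1 @ [y])"
  proof -
    have "last (y # P2) = f" using P(4) split by simp
    then have "f \<notin> set P1" using P(2) split last_in_set[of "y # P2"] by auto
    moreover have "y \<noteq> f" using P(2) P_snoc y by auto
    ultimately show ?thesis by simp
  qed
  ultimately show ?thesis using that by blast
qed

lemma cover_tree_at_top_level:
  assumes covers: "\<forall>R S. R \<subseteq> V \<longrightarrow> S \<subseteq> V \<longrightarrow> is_tree_cover V E wt R (S - R) (TCR R S)"
    and "0 \<le> s" and Us: "hier_path s d TCR V Us" and "3 \<le> card V"
    and nonneg: "\<forall>e\<in>E. 0 \<le> wt e"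
    and P: "path_betw V E x f P" "x \<noteq> f" and lvl: "lvl Us f \<le> lvl Us x"
  obtains P1 y P2 S T where "P = P1 @ y # P2" "f \<notin> set (P1 @ [y])"
    "(S, T) \<in> cov_trees TCR Us" "is_subtree V E T" "y \<in> S" "troot T \<in> S"
    "y \<in> tverts T" "f \<in> tverts T"
    "dep wt T y + dep wt T f \<le> (2 * ln (real (card V)) - 1) * plen wt (y # P2)"
proof -
  have "0 < length Us" "Us ! 0 = V" using Us by (auto simp: hier_path_def hd_conv_nth)
  moreover have walk: "walk_in V E P" "distinct P" "hd P = x" "last P = f"
    using P(1) by (simp_all add: path_betw_def path_in_def)
  ultimately obtain P1 y P2 where split: "P = P1 @ y # P2" "f \<notin> set (P1 @ [y])"
    and j: "lvl Us y < length Us" "y \<in> Us ! lvl Us y" "set P \<inter> nextU Us (lvl Us y) = {}"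
    using top_level_vertex[of 0 Us P x f] P(2) lvl by (auto simp: walk_in_def)
  define S where "S = Us ! lvl Us y"
  define R where "R = nextU Us (lvl Us y)"
  have "walk_in V E (y # P2)" using walk(1) walk_in_append_Cons_iff[of V E P1 y P2] split by simp
  then have "walk_in (V - R) (del_edges E R) (y # P2)"
    using j(3) split(1) by (intro walk_in_del_edges) (auto simp: R_def)
  moreover have "last (y # P2) = f" using walk(4) split by simp
  moreover have "S \<subseteq> V" "R \<subseteq> V"
    using hier_path_subset[OF covers \<open>0 \<le> s\<close> Us] j(1) by (auto simp: S_def R_def nextU_def)
  then have "is_tree_cover V E wt R (S - R) (TCR R S)" using covers by blast
  moreover have "y \<in> S - R" using j split(1) by (auto simp: S_def R_def)
  ultimately obtain w where w: "w \<in> S - R" "is_subtree (V - R) (del_edges E R) (TCR R S w)"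
    "troot (TCR R S w) = w" "y \<in> tverts (TCR R S w)" "f \<in> tverts (TCR R S w)"
    "dep wt (TCR R S w) y + dep wt (TCR R S w) f \<le> (2 * ln (real (card V)) - 1) * plen wt (y # P2)"
    using tree_cover_tree_through_walk[OF _ \<open>3 \<le> card V\<close> nonneg] by (metis list.sel(1))
  have "(S - R, TCR R S w) \<in> cov_trees TCR Us"
    unfolding cov_trees_def S_def R_def using j(1) w(1) S_def R_def by blast
  moreover have "is_subtree V E (TCR R S w)" using w(2) by (auto simp: is_subtree_def del_edges_def)
  ultimately show ?thesis
    using w \<open>y \<in> S - R\<close> by (intro that[OF split, of "S - R" "TCR R S w"]) auto
qed

lemma VH_vertex_via_cover_tree:
  assumes ST: "(S, T) \<in> cov_trees TCR Us" "is_subtree V E T"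
    and nonneg: "\<forall>e\<in>E. 0 \<le> wt e"
    and y: "y \<in> S" "y \<in> tverts T" and root: "troot T \<in> S"
    and f: "f \<in> D" "f \<in> tverts T"
    and xs: "walk_in V E (xs @ [y])" "set (xs @ [y]) \<inter> D = {}"
  obtains z where "z \<in> VH TCR Us D s0 t0"
    "dist_del V E wt D (hd (xs @ [y])) z \<le> plen wt (xs @ [y]) + dep wt T y + dep wt T f"
proof -
  have tree_nonneg: "\<forall>e\<in>tedges T. 0 \<le> wt e" using ST(2) nonneg by (auto simp: is_subtree_def)
  have "y \<notin> D" using xs(2) by auto
  have "0 \<le> dep wt T f" using dep_nonneg[OF ST(2) tree_nonneg f(2)] .
  obtain g z p where g: "g \<in> D" "g \<in> tverts T" "z \<in> NT S T g"
    and p: "walk_in (tverts T - D) (tedges T) p" "hd p = y" "last p = z"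
      "plen wt p \<le> dep wt T y + dep wt T f"
  proof (cases "\<exists>v\<in>set (tpath T y (troot T)). v \<in> D")
    case True
    then obtain g z p where "g \<in> D" "g \<in> tverts T" "z \<in> tchildren T g \<inter> trunk S T"
      "walk_in (tverts T - D) (tedges T) p" "hd p = y" "last p = z" "plen wt p \<le> dep wt T y"
      by (rule tree_walk_to_trunk_child[OF ST(2) tree_nonneg y \<open>y \<notin> D\<close> root])
    then show ?thesis using that[of g z p] \<open>0 \<le> dep wt T f\<close> by (simp add: NT_def)
  next
    case False
    then have "set (tpath T y (troot T)) \<inter> D = {}" by auto
    then obtain g p where "g \<in> D" "g \<in> tverts T" "g \<noteq> troot T"
      "walk_in (tverts T - D) (tedges T) p" "hd p = y" "last p = tparent T g"
      "plen wt p \<le> dep wt T y + dep wt T f"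
      by (rule tree_walk_to_parent[OF ST(2) tree_nonneg y(2) _ f])
    then show ?thesis using that[of g "tparent T g" p] by (simp add: NT_def)
  qed
  obtain p' where p': "p = y # p'" using p(1,2) by (cases p) (auto simp: walk_in_def)
  have "z \<notin> D" using p(1,3) last_in_set[of p] by (auto simp: walk_in_def)
  then have "z \<in> VH TCR Us D s0 t0" using ST(1) g unfolding VH_def Nf_def by blast
  have "walk_in V E (y # p')"
    using walk_in_mono[OF p(1), of V E] ST(2) unfolding p' is_subtree_def by blast
  moreover have "set (xs @ y # p') \<inter> D = {}" using xs(2) p(1) p' by (auto simp: walk_in_Diff_iff)
  ultimately have "dist_del V E wt D (hd (xs @ [y])) (last (y # p'))
      \<le> plen wt (xs @ [y]) + plen wt (y # p')"
    using xs(1) nonneg by (intro dist_del_le_plen_append)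
  then have "dist_del V E wt D (hd (xs @ [y])) z \<le> plen wt (xs @ [y]) + plen wt p"
    using p(3) unfolding p' by (simp only:)
  also have "\<dots> \<le> plen wt (xs @ [y]) + dep wt T y + dep wt T f" using p(4) by simp
  finally show ?thesis using that \<open>z \<in> VH TCR Us D s0 t0\<close> by blast
qed

theorem lemma3p5:
  fixes V :: "'a set" and E :: "'a set set" and wt :: "'a set \<Rightarrow> real" and W :: real
    and d :: nat and c :: real
    and TCR :: "'a set \<Rightarrow> 'a set \<Rightarrow> 'a \<Rightarrow> 'a rtree"
    and D :: "'a set" and Us :: "'a set list" and s0 t0 f x :: 'a and P :: "'a list"
  defines "n \<equiv> real (card V)"
  defines "k \<equiv> ln n"
  defines "s \<equiv> 4 * exp 1 * real d powr (c + 1) * (ln n)\<^sup>2 + 1"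
  assumes graph: "wgraph V E wt W"
    and n3: "card V \<ge> 3"
    and usp: "unique_sp V E wt"
    and d2: "d \<ge> 2" and c1: "c \<ge> 1"
    and covers: "\<forall>R S. R \<subseteq> V \<longrightarrow> S \<subseteq> V \<longrightarrow> is_tree_cover V E wt R (S - R) (TCR R S)"
    and DV: "D \<subseteq> V" and Dcard: "card D \<le> d"
    and hpath: "hier_path s d TCR V Us"
    and lowdeg: "\<forall>g\<in>D. \<forall>(S, T) \<in> cov_trees TCR Us. g \<in> tverts T \<longrightarrow> real (pdeg S T g) \<le> s"
    and s0: "s0 \<in> V - D" and t0: "t0 \<in> V - D"
    and fD: "f \<in> D" and xV: "x \<in> V - D"
    and lvl: "lvl Us x \<ge> lvl Us f"
    and P: "path_betw V E x f P" and PD: "set P \<inter> D \<subseteq> {f}"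
  shows "\<exists>w\<in>VH TCR Us D s0 t0. dist_del V E wt D x w \<le> ereal (2 * k - 1) * ereal (plen wt P)"
proof -
  have nonneg: "\<forall>e\<in>E. 0 \<le> wt e"
    using graph unfolding wgraph_def by (auto intro: order.trans[OF zero_le_one])
  have "1 \<le> k" unfolding k_def n_def using n3 by (rule one_le_ln_card)
  have "0 \<le> s" unfolding s_def by simp
  have "x \<noteq> f" using xV fD by auto
  obtain P1 y P2 S T where split: "P = P1 @ y # P2" "f \<notin> set (P1 @ [y])"
    and ST: "(S, T) \<in> cov_trees TCR Us" "is_subtree V E T" "y \<in> S" "troot T \<in> S"
      "y \<in> tverts T" "f \<in> tverts T"
    and dep: "dep wt T y + dep wt T f \<le> (2 * k - 1) * plen wt (y # P2)"
    using cover_tree_at_top_level[OF covers \<open>0 \<le> s\<close> hpath n3 nonneg P \<open>x \<noteq> f\<close> lvl]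
    unfolding k_def n_def by blast
  have walk: "walk_in V E P" "hd P = x" using P by (simp_all add: path_betw_def path_in_def)
  have "set (P1 @ [y]) \<inter> D = {}" using PD split by auto
  moreover have "walk_in V E (P1 @ [y])"
    using walk(1) walk_in_append_Cons_iff[of V E P1 y P2] split(1) by simp
  moreover have "hd (P1 @ [y]) = x" using walk(2) split(1) by (cases P1) auto
  ultimately obtain z where "z \<in> VH TCR Us D s0 t0"
    and dist: "dist_del V E wt D x z \<le> plen wt (P1 @ [y]) + dep wt T y + dep wt T f"
    using VH_vertex_via_cover_tree[OF ST(1,2) nonneg ST(3,5,4) fD ST(6)] by metis
  have "0 \<le> plen wt (P1 @ [y])" using plen_nonneg \<open>walk_in V E (P1 @ [y])\<close> nonneg by blast
  then have "plen wt (P1 @ [y]) \<le> (2 * k - 1) * plen wt (P1 @ [y])"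
    using \<open>1 \<le> k\<close> mult_right_mono[of 1 "2 * k - 1" "plen wt (P1 @ [y])"] by simp
  moreover have "plen wt P = plen wt (P1 @ [y]) + plen wt (y # P2)"
    unfolding split(1) by (rule plen_append_Cons)
  ultimately have "plen wt (P1 @ [y]) + dep wt T y + dep wt T f \<le> (2 * k - 1) * plen wt P"
    using dep by (simp add: distrib_left)
  with dist \<open>z \<in> VH TCR Us D s0 t0\<close> show ?thesis by (intro bexI[of _ z]) (auto simp: order_trans)
qed

end
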